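(* Let $X$ be a random variable taking values in a finite set $\mathcal{X}$ according to a PMF $P$, and let $f\colon\mathcal{X}\to\{1,\dots,|\mathcal{X}|\}$ be a bijection. Then $$\mathbb{E}[\log f(X)]\ \ge\ H(X)-\log\big(\ln|\mathcal{X}|+3/2\big).$$
   Context: $\log$ is base 2, $\ln$ is the natural logarithm, and $H(X)$ is the Shannon entropy (base 2) of $X$. *)

theory Defs
  imports "HOL-Probability.Probability"
begin

text \<open>Shannon entropy (base 2) of a discrete distribution with finite support,
  with the convention 0 log 0 = 0 (note log 2 0 = 0 in Isabelle).\<close>
definition shannon_entropy :: "'a pmf \<Rightarrow> real" where
  "shannon_entropy p = - (\<Sum>x\<in>set_pmf p. pmf p x * log 2 (pmf p x))"

end

theory Submission
  imports Defs "HOL-Analysis.Harmonic_Numbers"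
begin

text \<open>Gibbs' inequality against the subprobability weights \<open>q x = 1 / (f x \<cdot> H\<^sub>n)\<close>,
  where \<open>H\<^sub>n\<close> is the \<open>n\<close>-th harmonic number, gives
  \<open>H(X) \<le> E[log f(X)] + log H\<^sub>n\<close>; and \<open>H\<^sub>n \<le> ln n + 1\<close>.\<close>

lemma mult_log_div_le:
  fixes p q :: real
  assumes "p > 0" "q > 0"
  shows "p * log 2 (q / p) \<le> (q - p) / ln 2"
proof -
  have "p * ln (q / p) \<le> p * (q / p - 1)"
    using assms by (intro mult_left_mono ln_le_minus_one) auto
  also have "\<dots> = q - p" using assms by (simp add: field_simps)
  finally show ?thesis by (simp add: log_def divide_right_mono)
qed

lemma shannon_entropy_le_cross_entropy:
  fixes p :: "'a pmf" and q :: "'a \<Rightarrow> real"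
  assumes fin: "finite (set_pmf p)"
    and q_pos: "\<And>x. x \<in> set_pmf p \<Longrightarrow> q x > 0"
    and q_sum: "(\<Sum>x\<in>set_pmf p. q x) \<le> 1"
  shows "shannon_entropy p \<le> - (\<Sum>x\<in>set_pmf p. pmf p x * log 2 (q x))"
proof -
  have "(\<Sum>x\<in>set_pmf p. pmf p x * log 2 (q x)) - (\<Sum>x\<in>set_pmf p. pmf p x * log 2 (pmf p x))
      = (\<Sum>x\<in>set_pmf p. pmf p x * (log 2 (q x) - log 2 (pmf p x)))"
    by (simp add: sum_subtractf right_diff_distrib)
  also have "\<dots> = (\<Sum>x\<in>set_pmf p. pmf p x * log 2 (q x / pmf p x))"
    using q_pos by (intro sum.cong refl) (simp add: log_divide pmf_positive less_imp_neq[symmetric])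
  also have "\<dots> \<le> (\<Sum>x\<in>set_pmf p. (q x - pmf p x) / ln 2)"
    using q_pos by (intro sum_mono mult_log_div_le) (auto simp: pmf_positive)
  also have "\<dots> = ((\<Sum>x\<in>set_pmf p. q x) - 1) / ln 2"
    using fin by (simp add: sum_divide_distrib[symmetric] sum_subtractf sum_pmf_eq_1)
  also have "\<dots> \<le> 0" using q_sum by (simp add: divide_nonpos_pos)
  finally show ?thesis unfolding shannon_entropy_def by simp
qed

lemma harm_le_ln_plus_one:
  assumes "n \<ge> 1"
  shows "harm n \<le> ln (real n) + 1"
  using euler_mascheroni_sequence_decreasing[of 1 n] assms by (simp add: harm_def)

lemma sum_inverse_bij_betw_harm:
  assumes "bij_betw f A {1..card A}"
  shows "(\<Sum>x\<in>A. 1 / real (f x)) = harm (card A)"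
proof -
  have "(\<Sum>x\<in>A. 1 / real (f x)) = (\<Sum>k\<in>{1..card A}. 1 / real k)"
    using assms by (rule sum.reindex_bij_betw)
  then show ?thesis by (simp add: harm_def divide_inverse)
qed

lemma shannon_entropy_le_expectation_log:
  fixes p :: "'a pmf" and w :: "'a \<Rightarrow> real"
  assumes "finite A" "set_pmf p \<subseteq> A"
    and w_pos: "\<And>x. x \<in> A \<Longrightarrow> w x > 0"
    and Z_def: "Z = (\<Sum>x\<in>A. 1 / w x)"
  shows "shannon_entropy p \<le> measure_pmf.expectation p (\<lambda>x. log 2 (w x)) + log 2 Z"
proof -
  define q where "q x = 1 / (w x * Z)" for x
  have fin: "finite (set_pmf p)" using assms(1,2) by (rule finite_subset[rotated])
  have "set_pmf p \<noteq> {}" by (rule set_pmf_not_empty)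
  then have Z_pos: "Z > 0"
    unfolding Z_def using assms(1,2) w_pos by (intro sum_pos) auto
  have "(\<Sum>x\<in>set_pmf p. q x) \<le> (\<Sum>x\<in>A. q x)"
    using assms(1,2) w_pos Z_pos by (intro sum_mono2) (auto simp: q_def less_imp_le)
  also have "\<dots> = 1"
    using Z_pos by (simp add: q_def Z_def[symmetric] flip: sum_divide_distrib divide_divide_eq_left)
  finally have "shannon_entropy p \<le> - (\<Sum>x\<in>set_pmf p. pmf p x * log 2 (q x))"
    using fin assms(2) w_pos Z_pos by (intro shannon_entropy_le_cross_entropy) (auto simp: q_def)
  also have "\<dots> = (\<Sum>x\<in>set_pmf p. pmf p x * log 2 (w x) + pmf p x * log 2 Z)"
    using assms(2) w_pos Z_pos
    by (subst sum_negf[symmetric], intro sum.cong refl)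
      (force simp: q_def log_divide log_mult ring_distribs)
  also have "\<dots> = (\<Sum>x\<in>set_pmf p. pmf p x * log 2 (w x)) + log 2 Z"
    using fin by (simp add: sum.distrib sum_distrib_right[symmetric] sum_pmf_eq_1)
  also have "(\<Sum>x\<in>set_pmf p. pmf p x * log 2 (w x)) = measure_pmf.expectation p (\<lambda>x. log 2 (w x))"
    using fin by (subst integral_measure_pmf_real) (auto simp: mult.commute)
  finally show ?thesis .
qed

theorem lemma4:
  fixes p :: "'a pmf" and A :: "'a set" and f :: "'a \<Rightarrow> nat"
  assumes "finite A" and "A \<noteq> {}"
    and "set_pmf p \<subseteq> A"
    and "bij_betw f A {1..card A}"
  shows "measure_pmf.expectation p (\<lambda>x. log 2 (real (f x)))
           \<ge> shannon_entropy p - log 2 (ln (real (card A)) + 3/2)"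
proof -
  have card_pos: "card A \<ge> 1" using assms(1,2) by (simp add: Suc_le_eq card_gt_0_iff)
  have f_pos: "real (f x) > 0" if "x \<in> A" for x
    using bij_betwE[OF assms(4)] that by fastforce
  have "shannon_entropy p \<le> measure_pmf.expectation p (\<lambda>x. log 2 (real (f x))) + log 2 (harm (card A))"
    using assms(1,3) f_pos sum_inverse_bij_betw_harm[OF assms(4)]
    by (intro shannon_entropy_le_expectation_log) auto
  also have "log 2 (harm (card A)) \<le> log 2 (ln (real (card A)) + 3/2)"
    using harm_le_ln_plus_one[OF card_pos] card_pos by (intro log_mono) auto
  finally show ?thesis by simp
qed

end
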